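(* Let $n\ge 1$, let $G$ be a subgroup of the symmetric group $S_n$ acting on $T=\{1,\ldots,n\}$, and let $\mathcal{B}$ be a block partition for $G$. Then the map $\Psi\mapsto \Psi|_T$ is a group isomorphism from the automorphism group $\mathrm{Aut}(U_{G\looparrowright\mathcal{B}})$ of the ordered set $U_{G\looparrowright\mathcal{B}}$ onto $G$. In particular, every automorphism of $U_{G\looparrowright\mathcal{B}}$ maps $T$ onto $T$, its restriction to $T$ is an element of $G$, every element of $G$ arises as such a restriction, and an automorphism is uniquely determined by its restriction to $T$.
   Context: A block of a permutation group $G$ on $\{1,\ldots,n\}$ is a set $B\subseteq\{1,\ldots,n\}$ such that for all $\Phi\in G$, $\Phi[B]\cap B\neq\emptyset$ implies $\Phi[B]=B$. For $A\subseteq\{1,\ldots,n\}$ write $G\cdot A=\{\sigma[A]:\sigma\in G\}$. Let $O_1,\ldots,O_\ell$ be the orbits of $G$ on $\{1,\ldots,n\}$, and for each $j$ let $B_j\subseteq O_j$ be a (nonempty) block of $G$. The partition $\mathcal{B}=\bigcup_{j=1}^\ell G\cdot B_j$ of $\{1,\ldots,n\}$ is called a block partition with orbit cut $\{B_1,\ldots,B_\ell\}$. For $B\in\mathcal{B}$ let $G|_B=\{\theta|_B:\theta\in G\}$ (restrictions of elements of $G$ to $B$, regarded as functions with domain $B$), and let $M=\bigcup_{B\in\mathcal{B}}G|_B$. For $\mu\in M$ let $D^\mu=\mathrm{dom}(\mu)\times\{\mu\}$. The ordered set $U_{G\looparrowright\mathcal{B}}$ has as underlying set the disjoint union of $F=\{\ell_1,u_1,\ldots,\ell_n,u_n\}$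 (new symbols), $G$ (its elements as abstract points), $\bigcup_{\mu\in M}D^\mu$, and $T=\{1,\ldots,n\}$. Its order is the reflexive–transitive closure of the following strict comparabilities: (1) $\ell_1<u_1>\ell_2<u_2>\cdots>\ell_n<u_n$ (so $F$ is a fence with $2n$ elements); (2) for every $\mu\in M$ and every $j\in\mathrm{dom}(\mu)$: $u_j<(j,\mu)$ and $(j,\mu)<\mu(j)\in T$; (3) for every $\theta\in G$ and every $B\in\mathcal{B}$: $\theta<x$ for all $x\in D^{\theta|_B}$. No other comparabilities hold; in particular $G$, $\bigcup_{\mu\in M}D^\mu$ and $T$ are antichains. *)

theory Defs
  imports "HOL-Algebra.Sym_Groups"
begin

definition is_block :: "nat \<Rightarrow> (nat \<Rightarrow> nat) set \<Rightarrow> nat set \<Rightarrow> bool" where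
  "is_block n G B \<longleftrightarrow> B \<subseteq> {1..n} \<and> (\<forall>\<Phi>\<in>G. \<Phi> ` B \<inter> B \<noteq> {} \<longrightarrow> \<Phi> ` B = B)"

definition orbits :: "nat \<Rightarrow> (nat \<Rightarrow> nat) set \<Rightarrow> nat set set" where
  "orbits n G = {{\<sigma> i | \<sigma>. \<sigma> \<in> G} | i. i \<in> {1..n}}"

definition gset :: "(nat \<Rightarrow> nat) set \<Rightarrow> nat set \<Rightarrow> nat set set" where
  "gset G A = {\<sigma> ` A | \<sigma>. \<sigma> \<in> G}"

definition is_block_partition :: "nat \<Rightarrow> (nat \<Rightarrow> nat) set \<Rightarrow> nat set set \<Rightarrow> bool" where
  "is_block_partition n G \<B> \<longleftrightarrow>
     (\<exists>cut :: nat set \<Rightarrow> nat set.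
        (\<forall>Ob\<in>orbits n G. cut Ob \<subseteq> Ob \<and> cut Ob \<noteq> {} \<and> is_block n G (cut Ob)) \<and>
        \<B> = (\<Union>Ob\<in>orbits n G. gset G (cut Ob)))"

text \<open>Elements of the ordered set U: fence elements l_i, u_i; group elements;
  points (j, mu) of D^mu where mu is a partial map (restriction of some theta to a block);
  elements of T.\<close>
datatype Uel = Lo nat | Up nat | Gr "nat \<Rightarrow> nat" | Dp nat "nat \<rightharpoonup> nat" | Tp nat

definition restr :: "(nat \<Rightarrow> nat) \<Rightarrow> nat set \<Rightarrow> (nat \<rightharpoonup> nat)" where
  "restr \<theta> B = (Some \<circ> \<theta>) |` B"

definition Mset :: "(nat \<Rightarrow> nat) set \<Rightarrow> nat set set \<Rightarrow> (nat \<rightharpoonup> nat) set" where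
  "Mset G \<B> = {restr \<theta> B | \<theta> B. \<theta> \<in> G \<and> B \<in> \<B>}"

definition Ucarrier :: "nat \<Rightarrow> (nat \<Rightarrow> nat) set \<Rightarrow> nat set set \<Rightarrow> Uel set" where
  "Ucarrier n G \<B> =
     Lo ` {1..n} \<union> Up ` {1..n} \<union> Gr ` G \<union>
     {Dp j \<mu> | j \<mu>. \<mu> \<in> Mset G \<B> \<and> j \<in> dom \<mu>} \<union> Tp ` {1..n}"

definition Urel :: "nat \<Rightarrow> (nat \<Rightarrow> nat) set \<Rightarrow> nat set set \<Rightarrow> (Uel \<times> Uel) set" where
  "Urel n G \<B> =
     {(Lo i, Up i) | i. i \<in> {1..n}} \<union>
     {(Lo (Suc i), Up i) | i. i \<in> {1..<n}} \<union>
     {(Up j, Dp j \<mu>) | j \<mu>. \<mu> \<in> Mset G \<B> \<and> j \<in> dom \<mu>} \<union>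
     {(Dp j \<mu>, Tp (the (\<mu> j))) | j \<mu>. \<mu> \<in> Mset G \<B> \<and> j \<in> dom \<mu>} \<union>
     {(Gr \<theta>, Dp j (restr \<theta> B)) | \<theta> B j. \<theta> \<in> G \<and> B \<in> \<B> \<and> j \<in> B}"

definition Uleq :: "nat \<Rightarrow> (nat \<Rightarrow> nat) set \<Rightarrow> nat set set \<Rightarrow> Uel \<Rightarrow> Uel \<Rightarrow> bool" where
  "Uleq n G \<B> x y \<longleftrightarrow> x \<in> Ucarrier n G \<B> \<and> y \<in> Ucarrier n G \<B> \<and> (x, y) \<in> (Urel n G \<B>)\<^sup>*"

definition Aut :: "nat \<Rightarrow> (nat \<Rightarrow> nat) set \<Rightarrow> nat set set \<Rightarrow> (Uel \<Rightarrow> Uel) set" where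
  "Aut n G \<B> = {\<Psi>. bij_betw \<Psi> (Ucarrier n G \<B>) (Ucarrier n G \<B>) \<and>
      (\<forall>x\<in>Ucarrier n G \<B>. \<forall>y\<in>Ucarrier n G \<B>. Uleq n G \<B> x y \<longleftrightarrow> Uleq n G \<B> (\<Psi> x) (\<Psi> y)) \<and>
      (\<forall>x. x \<notin> Ucarrier n G \<B> \<longrightarrow> \<Psi> x = x)}"

definition Aut_group :: "nat \<Rightarrow> (nat \<Rightarrow> nat) set \<Rightarrow> nat set set \<Rightarrow> (Uel \<Rightarrow> Uel) monoid" where
  "Aut_group n G \<B> = \<lparr> carrier = Aut n G \<B>, mult = (\<circ>), one = id \<rparr>"

fun untp :: "Uel \<Rightarrow> nat" where
  "untp (Tp k) = k"
| "untp _ = 0"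

definition resT :: "nat \<Rightarrow> (Uel \<Rightarrow> Uel) \<Rightarrow> (nat \<Rightarrow> nat)" where
  "resT n \<Psi> = (\<lambda>i. if i \<in> {1..n} then untp (\<Psi> (Tp i)) else i)"

end

theory Submission
  imports Defs
begin

text \<open>
  Every automorphism \<open>\<Psi>\<close> of \<open>U\<close> preserves its layers, because they are order-definable:
  \<open>T\<close> consists of the maximal elements, \<open>{l\<^sub>i} \<union> G\<close> of the minimal ones, the \<open>u\<^sub>i\<close> are
  the elements of height one, and the \<open>l\<^sub>i\<close> are the minimal elements below some \<open>u\<^sub>j\<close>.
  The fence has no automorphism other than the identity (\<open>l\<^sub>1\<close> is the only \<open>l\<^sub>i\<close> below a
  single \<open>u\<^sub>j\<close>), so \<open>\<Psi>\<close> fixes it pointwise. Let \<open>\<sigma>\<close> be the restriction of \<open>\<Psi>\<close> to \<open>T\<close>.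
  Since \<open>u\<^sub>j < (j, \<theta>|\<^sub>B)\<close>, \<open>\<Psi>\<close> keeps the first coordinate of the points \<open>(j, \<mu>)\<close>,
  and the chains \<open>\<theta> < (j, \<theta>|\<^sub>B) < \<theta>(j)\<close> then force \<open>\<Psi>(\<theta>) = \<sigma> \<circ> \<theta>\<close> and
  \<open>\<Psi>(j, \<theta>|\<^sub>B) = (j, (\<sigma> \<circ> \<theta>)|\<^sub>B)\<close>, the block \<open>B\<close> being determined by \<open>j\<close>.
  Hence \<open>\<sigma> = \<Psi>(id) \<in> G\<close> and \<open>\<Psi>\<close> is determined by \<open>\<sigma>\<close>; conversely every \<open>g \<in> G\<close> acts on
  \<open>U\<close> by left composition, and this is an automorphism restricting to \<open>g\<close> on \<open>T\<close>.
\<close>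

section \<open>Order automorphisms\<close>

definition maximal_in :: "'a set \<Rightarrow> ('a \<Rightarrow> 'a \<Rightarrow> bool) \<Rightarrow> 'a \<Rightarrow> bool" where
  "maximal_in A leq x \<longleftrightarrow> x \<in> A \<and> (\<forall>y\<in>A. leq x y \<longrightarrow> y = x)"

definition minimal_in :: "'a set \<Rightarrow> ('a \<Rightarrow> 'a \<Rightarrow> bool) \<Rightarrow> 'a \<Rightarrow> bool" where
  "minimal_in A leq x \<longleftrightarrow> x \<in> A \<and> (\<forall>y\<in>A. leq y x \<longrightarrow> y = x)"

definition height_one_in :: "'a set \<Rightarrow> ('a \<Rightarrow> 'a \<Rightarrow> bool) \<Rightarrow> 'a \<Rightarrow> bool" where
  "height_one_in A leq x \<longleftrightarrow>
     x \<in> A \<and> \<not> minimal_in A leq x \<and> (\<forall>y\<in>A. leq y x \<longrightarrow> y = x \<or> minimal_in A leq y)"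

locale order_automorphism =
  fixes A :: "'a set" and leq :: "'a \<Rightarrow> 'a \<Rightarrow> bool" and f :: "'a \<Rightarrow> 'a"
  assumes bij: "bij_betw f A A"
    and le_iff: "x \<in> A \<Longrightarrow> y \<in> A \<Longrightarrow> leq (f x) (f y) \<longleftrightarrow> leq x y"
begin

lemma in_carrier: "x \<in> A \<Longrightarrow> f x \<in> A"
  using bij bij_betwE by blast

lemma apply_eq_iff: "x \<in> A \<Longrightarrow> y \<in> A \<Longrightarrow> f x = f y \<longleftrightarrow> x = y"
  using bij by (auto simp: bij_betw_def dest: inj_onD)

lemma ball_apply_iff: "(\<forall>y\<in>A. P (f y)) \<longleftrightarrow> (\<forall>y\<in>A. P y)"
  using bij_betw_imp_surj_on[OF bij] by (metis image_iff)

lemma bex_apply_iff: "(\<exists>y\<in>A. P (f y)) \<longleftrightarrow> (\<exists>y\<in>A. P y)"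
  using bij_betw_imp_surj_on[OF bij] by (metis image_iff)

lemma minimal_in_iff:
  assumes "x \<in> A" shows "minimal_in A leq (f x) \<longleftrightarrow> minimal_in A leq x"
proof -
  have "minimal_in A leq (f x) \<longleftrightarrow> (\<forall>y\<in>A. leq (f y) (f x) \<longrightarrow> f y = f x)"
    unfolding minimal_in_def using ball_apply_iff[of "\<lambda>y. leq y (f x) \<longrightarrow> y = f x"] in_carrier assms by simp
  also have "\<dots> \<longleftrightarrow> minimal_in A leq x"
    unfolding minimal_in_def using assms by (simp add: le_iff apply_eq_iff)
  finally show ?thesis .
qed

lemma maximal_in_iff:
  assumes "x \<in> A" shows "maximal_in A leq (f x) \<longleftrightarrow> maximal_in A leq x"
proof -
  have "maximal_in A leq (f x) \<longleftrightarrow> (\<forall>y\<in>A. leq (f x) (f y) \<longrightarrow> f y = f x)"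
    unfolding maximal_in_def using ball_apply_iff[of "\<lambda>y. leq (f x) y \<longrightarrow> y = f x"] in_carrier assms by simp
  also have "\<dots> \<longleftrightarrow> maximal_in A leq x"
    unfolding maximal_in_def using assms by (simp add: le_iff apply_eq_iff)
  finally show ?thesis .
qed

lemma height_one_in_iff:
  assumes "x \<in> A" shows "height_one_in A leq (f x) \<longleftrightarrow> height_one_in A leq x"
proof -
  have "height_one_in A leq (f x) \<longleftrightarrow> \<not> minimal_in A leq (f x) \<and>
      (\<forall>y\<in>A. leq (f y) (f x) \<longrightarrow> f y = f x \<or> minimal_in A leq (f y))"
    unfolding height_one_in_def
    using ball_apply_iff[of "\<lambda>y. leq y (f x) \<longrightarrow> y = f x \<or> minimal_in A leq y"] in_carrier assms by simp
  also have "\<dots> \<longleftrightarrow> height_one_in A leq x"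
    unfolding height_one_in_def using assms by (simp add: le_iff apply_eq_iff minimal_in_iff)
  finally show ?thesis .
qed

lemma image_eq_if_invariant:
  assumes "S \<subseteq> A" "\<And>x. x \<in> A \<Longrightarrow> f x \<in> S \<longleftrightarrow> x \<in> S"
  shows "f ` S = S"
proof
  show "f ` S \<subseteq> S" using assms by blast
  show "S \<subseteq> f ` S"
  proof
    fix y assume "y \<in> S"
    then obtain x where "x \<in> A" "y = f x" using assms(1) bij_betw_imp_surj_on[OF bij] by blast
    then show "y \<in> f ` S" using assms(2) \<open>y \<in> S\<close> by blast
  qed
qed

lemma bex_le_invariant_iff:
  assumes "S \<subseteq> A" "\<And>y. y \<in> A \<Longrightarrow> f y \<in> S \<longleftrightarrow> y \<in> S" "x \<in> A"
  shows "(\<exists>y\<in>S. leq (f x) y) \<longleftrightarrow> (\<exists>y\<in>S. leq x y)"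
proof -
  have "(\<exists>y\<in>S. leq (f x) y) \<longleftrightarrow> (\<exists>y\<in>A. y \<in> S \<and> leq (f x) y)" using assms(1) by blast
  also have "\<dots> \<longleftrightarrow> (\<exists>y\<in>A. f y \<in> S \<and> leq (f x) (f y))"
    by (rule bex_apply_iff[of "\<lambda>y. y \<in> S \<and> leq (f x) y", symmetric])
  also have "\<dots> \<longleftrightarrow> (\<exists>y\<in>S. leq x y)" using assms by (auto simp: le_iff)
  finally show ?thesis .
qed

end

section \<open>Block partitions\<close>

definition orbit :: "(nat \<Rightarrow> nat) set \<Rightarrow> nat \<Rightarrow> nat set" where
  "orbit G i = {\<sigma> i | \<sigma>. \<sigma> \<in> G}"

lemma orbits_eq_image_orbit: "orbits n G = orbit G ` {1..n}"
  unfolding orbits_def orbit_def by blast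

locale perm_group =
  fixes n :: nat and G :: "(nat \<Rightarrow> nat) set"
  assumes subgroup: "subgroup G (sym_group n)"
begin

lemma permutes: "\<sigma> \<in> G \<Longrightarrow> \<sigma> permutes {1..n}"
  using subgroup.subset[OF subgroup] by (auto simp: sym_group_carrier)

lemma id_in: "id \<in> G"
  using subgroup.one_closed[OF subgroup] by (simp add: sym_group_one)

lemma comp_in: "\<sigma> \<in> G \<Longrightarrow> \<tau> \<in> G \<Longrightarrow> \<sigma> \<circ> \<tau> \<in> G"
  using subgroup.m_closed[OF subgroup] by (simp add: sym_group_mult)

lemma inv_in: "\<sigma> \<in> G \<Longrightarrow> inv' \<sigma> \<in> G"
  using subgroup.m_inv_closed[OF subgroup] subgroup.mem_carrier[OF subgroup] by simp

lemma inv_apply: "\<sigma> \<in> G \<Longrightarrow> inv' \<sigma> (\<sigma> x) = x"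
  using permutes_inverses(2)[OF permutes] .

lemma apply_inv: "\<sigma> \<in> G \<Longrightarrow> \<sigma> (inv' \<sigma> x) = x"
  using permutes_inverses(1)[OF permutes] .

lemma apply_in: "\<sigma> \<in> G \<Longrightarrow> x \<in> {1..n} \<Longrightarrow> \<sigma> x \<in> {1..n}"
  using permutes_in_image[OF permutes] by blast

lemma apply_outside: "\<sigma> \<in> G \<Longrightarrow> x \<notin> {1..n} \<Longrightarrow> \<sigma> x = x"
  using permutes_not_in[OF permutes] .

lemma orbit_closed: assumes "\<sigma> \<in> G" "a \<in> orbit G i" shows "\<sigma> a \<in> orbit G i"
proof -
  obtain \<tau> where "\<tau> \<in> G" "a = \<tau> i" using assms(2) unfolding orbit_def by blast
  then have "\<sigma> a = (\<sigma> \<circ> \<tau>) i" "\<sigma> \<circ> \<tau> \<in> G" using comp_in assms(1) by auto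
  then show ?thesis unfolding orbit_def by blast
qed

lemma orbit_subset_interval: "i \<in> {1..n} \<Longrightarrow> orbit G i \<subseteq> {1..n}"
  unfolding orbit_def using apply_in by blast

lemma orbit_subset: "a \<in> orbit G i \<Longrightarrow> orbit G a \<subseteq> orbit G i"
  using orbit_closed unfolding orbit_def[of G a] by blast

lemma orbit_eq: assumes "a \<in> orbit G i" shows "orbit G a = orbit G i"
proof -
  obtain \<tau> where "\<tau> \<in> G" "a = \<tau> i" using assms unfolding orbit_def by blast
  then have "i = inv' \<tau> a" "inv' \<tau> \<in> G" using inv_in inv_apply by auto
  then have "i \<in> orbit G a" unfolding orbit_def by blast
  then show ?thesis using assms orbit_subset by blast
qed

lemma block_images_eq_or_disjoint:
  assumes "is_block n G C" "\<sigma> \<in> G" "\<tau> \<in> G" "\<sigma> ` C \<inter> \<tau> ` C \<noteq> {}"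
  shows "\<sigma> ` C = \<tau> ` C"
proof -
  have "(inv' \<tau> \<circ> \<sigma>) ` C \<inter> C \<noteq> {}"
    using assms(4) inv_apply[OF assms(3)] by (force simp: image_comp[symmetric])
  then have "(inv' \<tau> \<circ> \<sigma>) ` C = C"
    using assms(1) comp_in[OF inv_in[OF assms(3)] assms(2)] unfolding is_block_def by blast
  then have "\<tau> ` (inv' \<tau> ` \<sigma> ` C) = \<tau> ` C" by (simp add: image_comp)
  then show ?thesis using apply_inv[OF assms(3)] by (simp add: image_comp comp_def)
qed

lemma image_subset_orbit: "C \<subseteq> orbit G i \<Longrightarrow> \<sigma> \<in> G \<Longrightarrow> \<sigma> ` C \<subseteq> orbit G i"
  using orbit_closed by blast

lemma orbit_eq_if_common: "x \<in> orbit G i \<Longrightarrow> x \<in> orbit G i' \<Longrightarrow> orbit G i = orbit G i'"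
  using orbit_eq by metis

lemma mem_image_if_subset_orbit:
  assumes "C \<subseteq> orbit G j" "C \<noteq> {}"
  obtains \<sigma> where "\<sigma> \<in> G" "j \<in> \<sigma> ` C"
proof -
  obtain \<sigma> c where "c \<in> C" "\<sigma> \<in> G" "c = \<sigma> j" using assms unfolding orbit_def by blast
  then have "inv' \<sigma> \<in> G" "j = inv' \<sigma> c" using inv_in inv_apply by auto
  then show thesis using that \<open>c \<in> C\<close> by blast
qed

lemma block_partitionE:
  assumes "is_block_partition n G \<B>"
  obtains cut where
    "\<And>i. i \<in> {1..n} \<Longrightarrow> cut (orbit G i) \<subseteq> orbit G i"
    "\<And>i. i \<in> {1..n} \<Longrightarrow> cut (orbit G i) \<noteq> {}"
    "\<And>i. i \<in> {1..n} \<Longrightarrow> is_block n G (cut (orbit G i))"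
    "\<And>B. B \<in> \<B> \<longleftrightarrow> (\<exists>i\<in>{1..n}. \<exists>\<sigma>\<in>G. B = \<sigma> ` cut (orbit G i))"
proof -
  obtain cut where
    "\<forall>i\<in>{1..n}.
       cut (orbit G i) \<subseteq> orbit G i \<and> cut (orbit G i) \<noteq> {} \<and> is_block n G (cut (orbit G i))"
    and "\<B> = (\<Union>i\<in>{1..n}. gset G (cut (orbit G i)))"
    using assms unfolding is_block_partition_def orbits_eq_image_orbit by auto
  then show thesis using that unfolding gset_def by blast
qed

lemma block_partition_partition_on:
  assumes "is_block_partition n G \<B>"
  shows "partition_on {1..n} \<B>"
proof -
  obtain cut where cut_orbit: "\<And>i. i \<in> {1..n} \<Longrightarrow> cut (orbit G i) \<subseteq> orbit G i"
    and cut_nonempty: "\<And>i. i \<in> {1..n} \<Longrightarrow> cut (orbit G i) \<noteq> {}"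
    and cut_block: "\<And>i. i \<in> {1..n} \<Longrightarrow> is_block n G (cut (orbit G i))"
    and mem_\<B>: "\<And>B. B \<in> \<B> \<longleftrightarrow> (\<exists>i\<in>{1..n}. \<exists>\<sigma>\<in>G. B = \<sigma> ` cut (orbit G i))"
    using block_partitionE[OF assms] by blast
  have translate_in_orbit: "\<sigma> ` cut (orbit G i) \<subseteq> orbit G i" if "i \<in> {1..n}" "\<sigma> \<in> G" for i \<sigma>
    using image_subset_orbit[OF cut_orbit[OF that(1)] that(2)] .
  show ?thesis
  proof (rule partition_onI)
    have "j \<in> \<Union>\<B>" if j: "j \<in> {1..n}" for j
    proof -
      obtain \<sigma> where "\<sigma> \<in> G" "j \<in> \<sigma> ` cut (orbit G j)"
        using mem_image_if_subset_orbit[OF cut_orbit[OF j] cut_nonempty[OF j]] .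
      then show ?thesis using mem_\<B> j by blast
    qed
    moreover have "B \<subseteq> {1..n}" if "B \<in> \<B>" for B
      using that translate_in_orbit orbit_subset_interval unfolding mem_\<B> by blast
    ultimately show "\<Union>\<B> = {1..n}" by blast
  next
    fix B B' assume "B \<in> \<B>" "B' \<in> \<B>" "B \<noteq> B'"
    then obtain i \<sigma> i' \<sigma>' where i: "i \<in> {1..n}" "\<sigma> \<in> G" "B = \<sigma> ` cut (orbit G i)"
      and i': "i' \<in> {1..n}" "\<sigma>' \<in> G" "B' = \<sigma>' ` cut (orbit G i')"
      unfolding mem_\<B> by blast
    show "disjnt B B'"
    proof (rule ccontr)
      assume "\<not> disjnt B B'"
      then obtain x where x: "x \<in> B" "x \<in> B'" by (auto simp: disjnt_def)
      then have "x \<in> orbit G i" "x \<in> orbit G i'" using translate_in_orbit i i' by blast+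
      then have "orbit G i = orbit G i'" by (rule orbit_eq_if_common)
      then have "B' = \<sigma>' ` cut (orbit G i)" using i' by simp
      then have "B = B'"
        using block_images_eq_or_disjoint[OF cut_block[OF i(1)] i(2) i'(2)] i x by blast
      then show False using \<open>B \<noteq> B'\<close> by contradiction
    qed
  next
    show "{} \<notin> \<B>" using cut_nonempty unfolding mem_\<B> by blast
  qed
qed

end

section \<open>The ordered set U\<close>

lemma resT_outside: "i \<notin> {1..n} \<Longrightarrow> resT n \<Psi> i = i"
  unfolding resT_def by auto

lemma map_option_comp_restr: "map_option g \<circ> restr \<theta> B = restr (g \<circ> \<theta>) B"
  unfolding restr_def restrict_map_def by auto

locale U_poset = perm_group n G
  for n :: nat and G :: "(nat \<Rightarrow> nat) set" +
  fixes \<B> :: "nat set set"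
  assumes n_pos: "1 \<le> n"
    and block_partition: "is_block_partition n G \<B>"
begin

abbreviation "U \<equiv> Ucarrier n G \<B>"
abbreviation "R \<equiv> Urel n G \<B>"
abbreviation "leU \<equiv> Uleq n G \<B>"

lemma partition: "partition_on {1..n} \<B>"
  using block_partition_partition_on[OF block_partition] .

lemma block_member: "B \<in> \<B> \<Longrightarrow> j \<in> B \<Longrightarrow> j \<in> {1..n}"
  using partition_onD1[OF partition] by blast

lemma block_exists: assumes "j \<in> {1..n}" obtains B where "B \<in> \<B>" "j \<in> B"
  using partition_onD1[OF partition] assms by blast

lemma block_unique: "B \<in> \<B> \<Longrightarrow> B' \<in> \<B> \<Longrightarrow> j \<in> B \<Longrightarrow> j \<in> B' \<Longrightarrow> B = B'"
  using partition_onD2[OF partition] by (auto dest: disjointD)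

lemma dom_restr [simp]: "dom (restr \<theta> B) = B"
  unfolding restr_def by auto

lemma restr_eq_Some [simp]: "restr \<theta> B j = Some y \<longleftrightarrow> j \<in> B \<and> y = \<theta> j"
  unfolding restr_def restrict_map_def by auto

lemma restr_apply [simp]: "j \<in> B \<Longrightarrow> restr \<theta> B j = Some (\<theta> j)"
  unfolding restr_def by auto

lemma Mset_iff: "\<mu> \<in> Mset G \<B> \<longleftrightarrow> (\<exists>\<theta>\<in>G. \<exists>B\<in>\<B>. \<mu> = restr \<theta> B)"
  unfolding Mset_def by auto

lemma Lo_in_U [simp]: "Lo i \<in> U \<longleftrightarrow> i \<in> {1..n}"
  and Up_in_U [simp]: "Up i \<in> U \<longleftrightarrow> i \<in> {1..n}"
  and Gr_in_U [simp]: "Gr \<theta> \<in> U \<longleftrightarrow> \<theta> \<in> G"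
  and Tp_in_U [simp]: "Tp i \<in> U \<longleftrightarrow> i \<in> {1..n}"
  unfolding Ucarrier_def by auto

lemma Dp_in_U: "Dp j \<mu> \<in> U \<longleftrightarrow> (\<exists>\<theta>\<in>G. \<exists>B\<in>\<B>. j \<in> B \<and> \<mu> = restr \<theta> B)"
  unfolding Ucarrier_def Mset_iff by fastforce

lemma Dp_restr_in_U: "\<theta> \<in> G \<Longrightarrow> B \<in> \<B> \<Longrightarrow> j \<in> B \<Longrightarrow> Dp j (restr \<theta> B) \<in> U"
  using Dp_in_U by blast

lemma U_cases [consumes 1, case_names Lo Up Gr Dp Tp]:
  assumes "x \<in> U"
  obtains (Lo) i where "i \<in> {1..n}" "x = Lo i"
    | (Up) i where "i \<in> {1..n}" "x = Up i"
    | (Gr) \<theta> where "\<theta> \<in> G" "x = Gr \<theta>"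
    | (Dp) \<theta> B j where "\<theta> \<in> G" "B \<in> \<B>" "j \<in> B" "x = Dp j (restr \<theta> B)"
    | (Tp) k where "k \<in> {1..n}" "x = Tp k"
  using assms by (cases x) (auto simp: Dp_in_U)

lemma Urel_LoUp: "i \<in> {1..n} \<Longrightarrow> (Lo i, Up i) \<in> R"
  and Urel_UpDp: "\<theta> \<in> G \<Longrightarrow> B \<in> \<B> \<Longrightarrow> j \<in> B \<Longrightarrow> (Up j, Dp j (restr \<theta> B)) \<in> R"
  and Urel_GrDp: "\<theta> \<in> G \<Longrightarrow> B \<in> \<B> \<Longrightarrow> j \<in> B \<Longrightarrow> (Gr \<theta>, Dp j (restr \<theta> B)) \<in> R"
  and Urel_DpTp: "\<theta> \<in> G \<Longrightarrow> B \<in> \<B> \<Longrightarrow> j \<in> B \<Longrightarrow> (Dp j (restr \<theta> B), Tp (\<theta> j)) \<in> R"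
  unfolding Urel_def Mset_iff by (fastforce+)

lemma Urel_Lo_Up_iff: "(Lo i, Up j) \<in> R \<longleftrightarrow> j \<in> {1..n} \<and> (i = j \<or> i = Suc j \<and> j < n)"
  unfolding Urel_def by auto

lemma not_Urel_into_Lo [simp]: "(z, Lo i) \<notin> R"
  and not_Urel_into_Gr [simp]: "(z, Gr \<theta>) \<notin> R"
  and not_Urel_from_Tp [simp]: "(Tp k, z) \<notin> R"
  unfolding Urel_def by auto

lemma Urel_into_Up: "(z, Up i) \<in> R \<Longrightarrow> \<exists>i'. z = Lo i'"
  unfolding Urel_def by auto

lemma Urel_into_Dp:
  "(z, Dp j \<mu>) \<in> R \<Longrightarrow> z = Up j \<or> (\<exists>\<theta> B. z = Gr \<theta> \<and> B \<in> \<B> \<and> j \<in> B \<and> \<mu> = restr \<theta> B)"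
  unfolding Urel_def by auto

lemma Urel_into_Tp: "(z, Tp k) \<in> R \<Longrightarrow> \<exists>j \<mu>. z = Dp j \<mu> \<and> k = the (\<mu> j)"
  unfolding Urel_def by auto

lemma Urel_cases [consumes 1, case_names LoUp LoUp' UpDp DpTp GrDp]:
  assumes "(x, y) \<in> R"
  obtains (LoUp) i where "i \<in> {1..n}" "x = Lo i" "y = Up i"
    | (LoUp') i where "i \<in> {1..<n}" "x = Lo (Suc i)" "y = Up i"
    | (UpDp) \<theta> B j where "\<theta> \<in> G" "B \<in> \<B>" "j \<in> B" "x = Up j" "y = Dp j (restr \<theta> B)"
    | (DpTp) \<theta> B j where "\<theta> \<in> G" "B \<in> \<B>" "j \<in> B" "x = Dp j (restr \<theta> B)" "y = Tp (\<theta> j)"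
    | (GrDp) \<theta> B j where "\<theta> \<in> G" "B \<in> \<B>" "j \<in> B" "x = Gr \<theta>" "y = Dp j (restr \<theta> B)"
  using assms unfolding Urel_def Mset_iff by fastforce

lemma Urel_subset: "R \<subseteq> U \<times> U"
proof safe
  fix x y assume "(x, y) \<in> R"
  then have "x \<in> U \<and> y \<in> U"
  proof (cases rule: Urel_cases)
    case (UpDp \<theta> B j)
    then show ?thesis using block_member[of B j] Dp_restr_in_U by simp
  next
    case (DpTp \<theta> B j)
    then show ?thesis using block_member[of B j] Dp_restr_in_U apply_in by simp
  qed (auto simp: Dp_restr_in_U)
  then show "x \<in> U" "y \<in> U" by blast+
qed

lemma leU_iff: "leU x y \<longleftrightarrow> (x, y) \<in> R\<^sup>* \<and> x \<in> U \<and> y \<in> U"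
  unfolding Uleq_def by blast

lemma leU_if_Urel: "(x, y) \<in> R \<Longrightarrow> leU x y"
  using Urel_subset by (auto simp: leU_iff)

lemma rtrancl_Urel_into_Lo: "(z, Lo i) \<in> R\<^sup>* \<Longrightarrow> z = Lo i"
  by (erule rtranclE) auto

lemma rtrancl_Urel_into_Gr: "(z, Gr \<theta>) \<in> R\<^sup>* \<Longrightarrow> z = Gr \<theta>"
  by (erule rtranclE) auto

lemma rtrancl_Urel_from_Tp: "(Tp k, z) \<in> R\<^sup>* \<Longrightarrow> z = Tp k"
  by (erule converse_rtranclE) auto

lemma rtrancl_Urel_into_Up: "(z, Up i) \<in> R\<^sup>* \<Longrightarrow> z = Up i \<or> (z, Up i) \<in> R"
proof (erule rtranclE)
  fix w assume "(z, w) \<in> R\<^sup>*" "(w, Up i) \<in> R"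
  then show ?thesis using Urel_into_Up rtrancl_Urel_into_Lo by blast
qed simp

lemma rtrancl_Urel_into_Dp:
  "(z, Dp j \<mu>) \<in> R\<^sup>* \<Longrightarrow>
     z = Dp j \<mu> \<or> z = Up j \<or> (z, Up j) \<in> R \<or> (\<exists>\<theta> B. z = Gr \<theta> \<and> B \<in> \<B> \<and> j \<in> B \<and> \<mu> = restr \<theta> B)"
proof (erule rtranclE)
  fix w assume "(z, w) \<in> R\<^sup>*" "(w, Dp j \<mu>) \<in> R"
  then show ?thesis using Urel_into_Dp rtrancl_Urel_into_Up rtrancl_Urel_into_Gr by blast
qed simp

lemma rtrancl_Urel_into_Tp:
  "(z, Tp k) \<in> R\<^sup>* \<Longrightarrow> z = Tp k \<or> (\<exists>j \<mu>. (z, Dp j \<mu>) \<in> R\<^sup>* \<and> k = the (\<mu> j))"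
proof (erule rtranclE)
  fix w assume "(z, w) \<in> R\<^sup>*" "(w, Tp k) \<in> R"
  then show ?thesis using Urel_into_Tp by blast
qed simp

lemma leU_Lo_Up_iff: "leU (Lo i) (Up j) \<longleftrightarrow> i \<in> {1..n} \<and> j \<in> {1..n} \<and> (i = j \<or> i = Suc j)"
  unfolding leU_iff using rtrancl_Urel_into_Up[of "Lo i" j] by (auto simp: Urel_Lo_Up_iff)

lemma leU_Up_Dp: "leU (Up i) (Dp j \<mu>) \<Longrightarrow> i = j"
  unfolding leU_iff by (auto dest!: rtrancl_Urel_into_Dp Urel_into_Up)

lemma leU_Gr_Dp: "leU (Gr \<theta>) (Dp j \<mu>) \<Longrightarrow> \<exists>B\<in>\<B>. j \<in> B \<and> \<mu> = restr \<theta> B"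
  unfolding leU_iff by (auto dest!: rtrancl_Urel_into_Dp Urel_into_Up)

lemma leU_Dp_Tp: "leU (Dp j \<mu>) (Tp k) \<Longrightarrow> k = the (\<mu> j)"
  unfolding leU_iff by (auto dest!: rtrancl_Urel_into_Tp rtrancl_Urel_into_Dp Urel_into_Up)

lemma not_leU_Gr_Up: "\<not> leU (Gr \<theta>) (Up j)"
  unfolding leU_iff by (auto dest!: rtrancl_Urel_into_Up Urel_into_Up)

lemma leU_into_Up: "leU y (Up i) \<Longrightarrow> y = Up i \<or> y \<in> Lo ` {1..n}"
  unfolding leU_iff by (auto dest!: rtrancl_Urel_into_Up Urel_into_Up)

lemma maximal_in_U_iff: "maximal_in U leU x \<longleftrightarrow> x \<in> Tp ` {1..n}"
proof
  assume max: "maximal_in U leU x"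
  then have "x \<in> U" unfolding maximal_in_def by blast
  then show "x \<in> Tp ` {1..n}"
  proof (cases rule: U_cases)
    case (Lo i)
    then have "leU x (Up i)" by (simp add: leU_if_Urel Urel_LoUp)
    then show ?thesis using max Lo unfolding maximal_in_def by auto
  next
    case (Up i)
    then obtain B where "B \<in> \<B>" "i \<in> B" using block_exists by blast
    then have "leU x (Dp i (restr id B))" using Up id_in by (simp add: leU_if_Urel Urel_UpDp)
    then show ?thesis using max Up unfolding maximal_in_def leU_iff by auto
  next
    case (Gr \<theta>)
    obtain B where "B \<in> \<B>" "1 \<in> B" using block_exists n_pos by auto
    then have "leU x (Dp 1 (restr \<theta> B))" using Gr by (simp add: leU_if_Urel Urel_GrDp)
    then show ?thesis using max Gr unfolding maximal_in_def leU_iff by auto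
  next
    case (Dp \<theta> B j)
    then have "leU x (Tp (\<theta> j))" by (simp add: leU_if_Urel Urel_DpTp)
    then show ?thesis using max Dp unfolding maximal_in_def leU_iff by auto
  qed auto
next
  assume "x \<in> Tp ` {1..n}"
  then show "maximal_in U leU x" unfolding maximal_in_def leU_iff by (auto dest: rtrancl_Urel_from_Tp)
qed

lemma minimal_in_U_iff: "minimal_in U leU x \<longleftrightarrow> x \<in> Lo ` {1..n} \<union> Gr ` G"
proof
  assume min: "minimal_in U leU x"
  then have "x \<in> U" unfolding minimal_in_def by blast
  then show "x \<in> Lo ` {1..n} \<union> Gr ` G"
  proof (cases rule: U_cases)
    case (Up i)
    then have "leU (Lo i) x" by (simp add: leU_if_Urel Urel_LoUp)
    then show ?thesis using min Up unfolding minimal_in_def leU_iff by auto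
  next
    case (Dp \<theta> B j)
    then have "leU (Up j) x" by (simp add: leU_if_Urel Urel_UpDp)
    then show ?thesis using min Dp unfolding minimal_in_def leU_iff by auto
  next
    case (Tp k)
    then obtain B where "B \<in> \<B>" "k \<in> B" using block_exists by blast
    then have "leU (Dp k (restr id B)) x" using Tp id_in Urel_DpTp[of id B k] by (simp add: leU_if_Urel)
    then show ?thesis using min Tp unfolding minimal_in_def leU_iff by auto
  qed auto
next
  assume "x \<in> Lo ` {1..n} \<union> Gr ` G"
  then show "minimal_in U leU x"
    unfolding minimal_in_def leU_iff by (auto dest: rtrancl_Urel_into_Lo rtrancl_Urel_into_Gr)
qed

lemma height_one_in_U_iff: "height_one_in U leU x \<longleftrightarrow> x \<in> Up ` {1..n}"
proof
  assume h: "height_one_in U leU x"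
  then have "x \<in> U" "\<not> minimal_in U leU x"
    and below: "\<And>y. y \<in> U \<Longrightarrow> leU y x \<Longrightarrow> y = x \<or> minimal_in U leU y"
    unfolding height_one_in_def by blast+
  then show "x \<in> Up ` {1..n}"
  proof (cases rule: U_cases)
    case (Dp \<theta> B j)
    then have "leU (Up j) x" by (simp add: leU_if_Urel Urel_UpDp)
    then show ?thesis using below[of "Up j"] Dp by (auto simp: minimal_in_U_iff leU_iff)
  next
    case (Tp k)
    then obtain B where "B \<in> \<B>" "k \<in> B" using block_exists by blast
    then have "leU (Dp k (restr id B)) x" using Tp id_in Urel_DpTp[of id B k] by (simp add: leU_if_Urel)
    then show ?thesis using below[of "Dp k (restr id B)"] Tp by (auto simp: minimal_in_U_iff leU_iff)
  qed (auto simp: minimal_in_U_iff)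
next
  assume x: "x \<in> Up ` {1..n}"
  then have "\<forall>y\<in>U. leU y x \<longrightarrow> y = x \<or> minimal_in U leU y"
    using leU_into_Up minimal_in_U_iff by blast
  then show "height_one_in U leU x"
    using x minimal_in_U_iff unfolding height_one_in_def by auto
qed

lemma below_Up_iff:
  "x \<in> Lo ` {1..n} \<union> Gr ` G \<Longrightarrow> (\<exists>y\<in>Up ` {1..n}. leU x y) \<longleftrightarrow> x \<in> Lo ` {1..n}"
  using leU_Lo_Up_iff not_leU_Gr_Up by auto

end

section \<open>Automorphisms of U\<close>

text \<open>\<open>p\<close> and \<open>q\<close> record how an automorphism permutes the indices of the \<open>l\<^sub>i\<close> and of the
  \<open>u\<^sub>i\<close>.\<close>

lemma fence_bij_fixes_first:
  fixes p q :: "nat \<Rightarrow> nat"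
  assumes p: "bij_betw p {1..n} {1..n}" and q: "bij_betw q {1..n} {1..n}"
    and adj: "\<And>i j. i \<in> {1..n} \<Longrightarrow> j \<in> {1..n} \<Longrightarrow>
                (p i = q j \<or> p i = Suc (q j)) \<longleftrightarrow> (i = j \<or> i = Suc j)"
    and n: "1 \<le> n"
  shows "p 1 = 1"
proof (rule ccontr)
  assume "p 1 \<noteq> 1"
  moreover have "p 1 \<in> {1..n}" using bij_betwE[OF p] n by simp
  ultimately have k: "2 \<le> p 1" "p 1 \<le> n" by auto
  have q_onto: "k \<in> {1..n} \<Longrightarrow> \<exists>j\<in>{1..n}. q j = k" for k
    using bij_betw_imp_surj_on[OF q] by (metis imageE)
  obtain a where a: "a \<in> {1..n}" "q a = p 1" using q_onto[of "p 1"] k by auto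
  obtain b where b: "b \<in> {1..n}" "Suc (q b) = p 1" using q_onto[of "p 1 - 1"] k by force
  have "a = 1" using adj[of 1 a] a n by auto
  moreover have "b = 1" using adj[of 1 b] b n by auto
  ultimately show False using a b by simp
qed

lemma fence_bij_fixed:
  fixes p q :: "nat \<Rightarrow> nat"
  assumes p: "bij_betw p {1..n} {1..n}" and q: "bij_betw q {1..n} {1..n}"
    and adj: "\<And>i j. i \<in> {1..n} \<Longrightarrow> j \<in> {1..n} \<Longrightarrow>
                (p i = q j \<or> p i = Suc (q j)) \<longleftrightarrow> (i = j \<or> i = Suc j)"
    and i: "i \<in> {1..n}"
  shows "p i = i \<and> q i = i"
proof -
  have p_inj: "p i = p j \<Longrightarrow> i \<in> {1..n} \<Longrightarrow> j \<in> {1..n} \<Longrightarrow> i = j" for i j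
    using p by (auto simp: bij_betw_def dest: inj_onD)
  have q_inj: "q i = q j \<Longrightarrow> i \<in> {1..n} \<Longrightarrow> j \<in> {1..n} \<Longrightarrow> i = j" for i j
    using q by (auto simp: bij_betw_def dest: inj_onD)
  have q_step: "q i = i" if i: "i \<in> {1..n}" "p i = i" and prev: "2 \<le> i \<Longrightarrow> q (i - 1) = i - 1" for i
  proof (rule ccontr)
    assume "q i \<noteq> i"
    then have "i = Suc (q i)" using adj[OF i(1) i(1)] i(2) by auto
    moreover have "q i \<in> {1..n}" using bij_betwE[OF q] i(1) by simp
    ultimately have "q i = q (i - 1)" "i - 1 \<in> {1..n}" using prev by auto
    then show False using q_inj i(1) \<open>i = Suc (q i)\<close> by fastforce
  qed
  have p_step: "p (Suc m) = Suc m" if m: "Suc m \<le> n" "1 \<le> m" "p m = m" "q m = m" for m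
  proof -
    have "p (Suc m) = m \<or> p (Suc m) = Suc m" using adj[of "Suc m" m] m by auto
    moreover have "p (Suc m) \<noteq> m" using p_inj[of "Suc m" m] m by auto
    ultimately show ?thesis by blast
  qed
  have "Suc m \<le> n \<Longrightarrow> p (Suc m) = Suc m \<and> q (Suc m) = Suc m" for m
  proof (induction m)
    case 0
    then show ?case using fence_bij_fixes_first[OF p q adj] q_step[of 1] by simp
  next
    case (Suc m)
    then have "p (Suc (Suc m)) = Suc (Suc m)" using p_step[of "Suc m"] by simp
    then show ?case using q_step[of "Suc (Suc m)"] Suc by simp
  qed
  then show ?thesis using i by (cases i) auto
qed

locale U_automorphism = U_poset +
  fixes \<Psi> :: "Uel \<Rightarrow> Uel"
  assumes aut: "\<Psi> \<in> Aut n G \<B>"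

sublocale U_automorphism \<subseteq> order_automorphism U leU \<Psi>
  using aut unfolding Aut_def by unfold_locales auto

lemma (in U_poset) U_automorphismI: "\<Psi> \<in> Aut n G \<B> \<Longrightarrow> U_automorphism n G \<B> \<Psi>"
  by unfold_locales

context U_automorphism
begin

lemma Tp_layer_iff: "x \<in> U \<Longrightarrow> \<Psi> x \<in> Tp ` {1..n} \<longleftrightarrow> x \<in> Tp ` {1..n}"
  using maximal_in_iff by (simp add: maximal_in_U_iff)

lemma Tp_layer_image: "\<Psi> ` (Tp ` {1..n}) = Tp ` {1..n}"
proof (rule image_eq_if_invariant)
  show "Tp ` {1..n} \<subseteq> U" by auto
qed (rule Tp_layer_iff)

lemma Up_layer_iff: "x \<in> U \<Longrightarrow> \<Psi> x \<in> Up ` {1..n} \<longleftrightarrow> x \<in> Up ` {1..n}"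
  using height_one_in_iff by (simp add: height_one_in_U_iff)

lemma bottom_layer_iff: "x \<in> U \<Longrightarrow> \<Psi> x \<in> Lo ` {1..n} \<union> Gr ` G \<longleftrightarrow> x \<in> Lo ` {1..n} \<union> Gr ` G"
  using minimal_in_iff by (simp add: minimal_in_U_iff)

lemma Lo_layer_iff: assumes "x \<in> U" shows "\<Psi> x \<in> Lo ` {1..n} \<longleftrightarrow> x \<in> Lo ` {1..n}"
proof (cases "x \<in> Lo ` {1..n} \<union> Gr ` G")
  case True
  have "Up ` {1..n} \<subseteq> U" by auto
  then have "(\<exists>y\<in>Up ` {1..n}. leU (\<Psi> x) y) \<longleftrightarrow> (\<exists>y\<in>Up ` {1..n}. leU x y)"
    using bex_le_invariant_iff[OF _ Up_layer_iff assms] by blast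
  then show ?thesis using True below_Up_iff bottom_layer_iff assms by metis
next
  case False
  then show ?thesis using bottom_layer_iff assms by blast
qed

lemma Gr_layer_iff: "x \<in> U \<Longrightarrow> \<Psi> x \<in> Gr ` G \<longleftrightarrow> x \<in> Gr ` G"
proof -
  have "z \<in> Gr ` G \<longleftrightarrow> z \<in> Lo ` {1..n} \<union> Gr ` G \<and> z \<notin> Lo ` {1..n}" for z
    by auto
  then show "x \<in> U \<Longrightarrow> ?thesis" using bottom_layer_iff Lo_layer_iff by presburger
qed

lemma layer_index_bij:
  assumes C: "inj C" "\<And>i. i \<in> {1..n} \<Longrightarrow> C i \<in> U"
    and layer: "\<And>x. x \<in> U \<Longrightarrow> \<Psi> x \<in> C ` {1..n} \<longleftrightarrow> x \<in> C ` {1..n}"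
  obtains p where "bij_betw p {1..n} {1..n}" "\<And>i. i \<in> {1..n} \<Longrightarrow> \<Psi> (C i) = C (p i)"
proof
  define p where "p i = the_inv C (\<Psi> (C i))" for i
  have p: "p i \<in> {1..n} \<and> \<Psi> (C i) = C (p i)" if "i \<in> {1..n}" for i
    using layer[OF C(2)[OF that]] that C(1) unfolding p_def by (auto simp: the_inv_f_f)
  then show "\<Psi> (C i) = C (p i)" if "i \<in> {1..n}" for i
    using that by blast
  have "inj_on p {1..n}"
    using p C apply_eq_iff by (metis inj_onI inj_eq)
  moreover have "p ` {1..n} \<subseteq> {1..n}" using p by blast
  ultimately show "bij_betw p {1..n} {1..n}"
    using endo_inj_surj[of "{1..n}" p] by (simp add: bij_betw_def)
qed

lemma fence_fixed: assumes "i \<in> {1..n}" shows "\<Psi> (Lo i) = Lo i" "\<Psi> (Up i) = Up i"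
proof -
  obtain p where p: "bij_betw p {1..n} {1..n}" "\<And>i. i \<in> {1..n} \<Longrightarrow> \<Psi> (Lo i) = Lo (p i)"
    using layer_index_bij[of Lo] Lo_layer_iff by (auto simp: inj_def)
  obtain q where q: "bij_betw q {1..n} {1..n}" "\<And>i. i \<in> {1..n} \<Longrightarrow> \<Psi> (Up i) = Up (q i)"
    using layer_index_bij[of Up] Up_layer_iff by (auto simp: inj_def)
  have "(p i = q j \<or> p i = Suc (q j)) \<longleftrightarrow> (i = j \<or> i = Suc j)"
    if "i \<in> {1..n}" "j \<in> {1..n}" for i j
  proof -
    have "leU (Lo (p i)) (Up (q j)) \<longleftrightarrow> leU (Lo i) (Up j)"
      using le_iff[of "Lo i" "Up j"] p(2) q(2) that by simp
    then show ?thesis using that p(1) q(1) bij_betwE[OF p(1)] bij_betwE[OF q(1)]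
      by (simp add: leU_Lo_Up_iff)
  qed
  then have "p i = i \<and> q i = i" using fence_bij_fixed[OF p(1) q(1)] assms by blast
  then show "\<Psi> (Lo i) = Lo i" "\<Psi> (Up i) = Up i" using p(2) q(2) assms by auto
qed

lemma Tp_image: "k \<in> {1..n} \<Longrightarrow> \<Psi> (Tp k) = Tp (resT n \<Psi> k) \<and> resT n \<Psi> k \<in> {1..n}"
  using Tp_layer_iff[of "Tp k"] by (auto simp: resT_def)

lemma Dp_image_Dp: assumes "Dp j \<mu> \<in> U" obtains \<mu>' where "\<Psi> (Dp j \<mu>) = Dp j \<mu>'"
proof -
  have x: "\<Psi> (Dp j \<mu>) \<in> U" using in_carrier assms by blast
  then obtain j' \<mu>' where \<Psi>x: "\<Psi> (Dp j \<mu>) = Dp j' \<mu>'"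
    using Tp_layer_iff[OF assms] Up_layer_iff[OF assms] bottom_layer_iff[OF assms]
    by (cases rule: U_cases) auto
  obtain \<theta> B where "\<theta> \<in> G" "B \<in> \<B>" "j \<in> B" "\<mu> = restr \<theta> B"
    using assms by (auto simp: Dp_in_U)
  then have "leU (Up j) (Dp j \<mu>)" "j \<in> {1..n}"
    using leU_if_Urel Urel_UpDp block_member by blast+
  then have "leU (Up j) (Dp j' \<mu>')" using le_iff[of "Up j" "Dp j \<mu>"] fence_fixed assms \<Psi>x by simp
  then show ?thesis using that \<Psi>x leU_Up_Dp by blast
qed

lemma Gr_image: assumes \<theta>: "\<theta> \<in> G" shows "\<Psi> (Gr \<theta>) = Gr (resT n \<Psi> \<circ> \<theta>)"
proof -
  obtain \<theta>' where \<theta>': "\<theta>' \<in> G" "\<Psi> (Gr \<theta>) = Gr \<theta>'"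
    using Gr_layer_iff[of "Gr \<theta>"] \<theta> by auto
  have "\<theta>' j = resT n \<Psi> (\<theta> j)" for j
  proof (cases "j \<in> {1..n}")
    case False
    then show ?thesis using apply_outside[OF \<theta>] apply_outside[OF \<theta>'(1)] resT_outside by simp
  next
    case True
    obtain B where B: "B \<in> \<B>" "j \<in> B" using block_exists True by blast
    let ?d = "Dp j (restr \<theta> B)"
    have d: "?d \<in> U" "leU (Gr \<theta>) ?d" "leU ?d (Tp (\<theta> j))"
      using \<theta> B Dp_restr_in_U leU_if_Urel Urel_GrDp Urel_DpTp by auto
    obtain \<mu>' where \<mu>': "\<Psi> ?d = Dp j \<mu>'" using Dp_image_Dp[OF d(1)] .
    have "leU (Gr \<theta>') (Dp j \<mu>')" using le_iff[of "Gr \<theta>" ?d] d \<theta> \<theta>' \<mu>' by simp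
    then obtain B' where "B' \<in> \<B>" "j \<in> B'" "\<mu>' = restr \<theta>' B'" using leU_Gr_Dp by blast
    moreover have "leU (Dp j \<mu>') (Tp (resT n \<Psi> (\<theta> j)))"
      using le_iff[of ?d "Tp (\<theta> j)"] d \<mu>' Tp_image[of "\<theta> j"] apply_in[OF \<theta> True] by simp
    ultimately show ?thesis using leU_Dp_Tp by fastforce
  qed
  then have "\<theta>' = resT n \<Psi> \<circ> \<theta>" by auto
  then show ?thesis using \<theta>' by simp
qed

lemma resT_in: "resT n \<Psi> \<in> G"
  using Gr_image[OF id_in] in_carrier[of "Gr id"] id_in by simp

lemma Dp_image:
  assumes "\<theta> \<in> G" "B \<in> \<B>" "j \<in> B"
  shows "\<Psi> (Dp j (restr \<theta> B)) = Dp j (restr (resT n \<Psi> \<circ> \<theta>) B)"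
proof -
  let ?d = "Dp j (restr \<theta> B)"
  have d: "?d \<in> U" "leU (Gr \<theta>) ?d" using assms Dp_restr_in_U leU_if_Urel Urel_GrDp by auto
  obtain \<mu>' where \<mu>': "\<Psi> ?d = Dp j \<mu>'" using Dp_image_Dp[OF d(1)] .
  have "leU (Gr (resT n \<Psi> \<circ> \<theta>)) (Dp j \<mu>')"
    using le_iff[of "Gr \<theta>" ?d] d assms \<mu>' Gr_image by simp
  then obtain B' where "B' \<in> \<B>" "j \<in> B'" "\<mu>' = restr (resT n \<Psi> \<circ> \<theta>) B'" using leU_Gr_Dp by blast
  then show ?thesis using \<mu>' block_unique assms by blast
qed

end

section \<open>The action of G on U\<close>

fun Uact :: "(nat \<Rightarrow> nat) \<Rightarrow> Uel \<Rightarrow> Uel" where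
  "Uact g (Lo i) = Lo i"
| "Uact g (Up i) = Up i"
| "Uact g (Gr \<theta>) = Gr (g \<circ> \<theta>)"
| "Uact g (Dp j \<mu>) = Dp j (map_option g \<circ> \<mu>)"
| "Uact g (Tp k) = Tp (g k)"

lemma Uact_id: "Uact id x = x"
  by (cases x) (simp_all add: option.map_id0)

lemma Uact_comp: "Uact (g \<circ> h) x = Uact g (Uact h x)"
  by (cases x) (simp_all add: comp_assoc option.map_comp comp_def)

context U_poset
begin

definition Uaut :: "(nat \<Rightarrow> nat) \<Rightarrow> Uel \<Rightarrow> Uel" where
  "Uaut g x = (if x \<in> U then Uact g x else x)"

lemma Uact_in_U: assumes "g \<in> G" "x \<in> U" shows "Uact g x \<in> U"
  using assms(2)
proof (cases rule: U_cases)
  case (Tp k)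
  then show ?thesis using apply_in[OF assms(1)] by simp
qed (use assms in \<open>auto simp: map_option_comp_restr comp_in Dp_restr_in_U\<close>)

lemma Uact_Urel: assumes "g \<in> G" "(x, y) \<in> R" shows "(Uact g x, Uact g y) \<in> R"
  using assms(2)
proof (cases rule: Urel_cases)
  case (UpDp \<theta> B j)
  then show ?thesis using Urel_UpDp[OF comp_in[OF assms(1)]] by (simp add: map_option_comp_restr)
next
  case (DpTp \<theta> B j)
  then show ?thesis using Urel_DpTp[OF comp_in[OF assms(1)]] by (simp add: map_option_comp_restr)
next
  case (GrDp \<theta> B j)
  then show ?thesis using Urel_GrDp[OF comp_in[OF assms(1)]] by (simp add: map_option_comp_restr)
qed (auto simp: Urel_Lo_Up_iff)

lemma Uact_leU: assumes "g \<in> G" "leU x y" shows "leU (Uact g x) (Uact g y)"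
proof -
  have "(x, y) \<in> R\<^sup>*" "x \<in> U" "y \<in> U" using assms(2) by (auto simp: leU_iff)
  moreover from \<open>(x, y) \<in> R\<^sup>*\<close> have "(Uact g x, Uact g y) \<in> R\<^sup>*"
    by (induction rule: rtrancl_induct) (auto intro: rtrancl_into_rtrancl Uact_Urel[OF assms(1)])
  ultimately show ?thesis using Uact_in_U assms(1) by (simp add: leU_iff)
qed

lemma Uact_inv: "g \<in> G \<Longrightarrow> Uact (inv' g) (Uact g x) = x"
  using Uact_comp[of "inv' g" g x] permutes_inv_o(2)[OF permutes] by (simp add: Uact_id)

lemma Uact_inv': "g \<in> G \<Longrightarrow> Uact g (Uact (inv' g) x) = x"
  using Uact_comp[of g "inv' g" x] permutes_inv_o(1)[OF permutes] by (simp add: Uact_id)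

lemma Uaut_in_Aut: assumes g: "g \<in> G" shows "Uaut g \<in> Aut n G \<B>"
proof -
  have g': "inv' g \<in> G" using inv_in g .
  have inv: "Uaut (inv' g) (Uaut g x) = x" "Uaut g (Uaut (inv' g) x) = x" if "x \<in> U" for x
    using that by (simp_all add: Uaut_def Uact_in_U g g' Uact_inv Uact_inv')
  have "bij_betw (Uaut g) U U"
    using inv Uact_in_U g g' by (intro bij_betw_byWitness[where f' = "Uaut (inv' g)"]) (auto simp: Uaut_def)
  moreover have "leU x y \<longleftrightarrow> leU (Uaut g x) (Uaut g y)" if "x \<in> U" "y \<in> U" for x y
    using that Uact_leU[OF g] Uact_leU[OF g', of "Uact g x" "Uact g y"] Uact_inv[OF g]
    by (auto simp: Uaut_def)
  ultimately show ?thesis unfolding Aut_def by (auto simp: Uaut_def)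
qed

lemma resT_Uaut: "g \<in> G \<Longrightarrow> resT n (Uaut g) = g"
  by (auto simp: resT_def Uaut_def apply_outside)

lemma Aut_eqI:
  assumes "\<Psi> \<in> Aut n G \<B>" "\<Phi> \<in> Aut n G \<B>" "resT n \<Psi> = resT n \<Phi>"
  shows "\<Psi> = \<Phi>"
proof
  interpret \<Psi>: U_automorphism n G \<B> \<Psi> by (rule U_automorphismI[OF assms(1)])
  interpret \<Phi>: U_automorphism n G \<B> \<Phi> by (rule U_automorphismI[OF assms(2)])
  fix x show "\<Psi> x = \<Phi> x"
  proof (cases "x \<in> U")
    case True
    then show ?thesis
      by (cases rule: U_cases)
        (simp_all add: \<Psi>.fence_fixed \<Phi>.fence_fixed \<Psi>.Gr_image \<Phi>.Gr_image
          \<Psi>.Dp_image \<Phi>.Dp_image \<Psi>.Tp_image \<Phi>.Tp_image assms(3))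
  next
    case False
    then show ?thesis using assms(1,2) by (simp add: Aut_def)
  qed
qed

lemma resT_comp:
  assumes "\<Psi> \<in> Aut n G \<B>" "\<Phi> \<in> Aut n G \<B>"
  shows "resT n (\<Psi> \<circ> \<Phi>) = resT n \<Psi> \<circ> resT n \<Phi>"
proof
  interpret \<Psi>: U_automorphism n G \<B> \<Psi> by (rule U_automorphismI[OF assms(1)])
  interpret \<Phi>: U_automorphism n G \<B> \<Phi> by (rule U_automorphismI[OF assms(2)])
  fix i show "resT n (\<Psi> \<circ> \<Phi>) i = (resT n \<Psi> \<circ> resT n \<Phi>) i"
  proof (cases "i \<in> {1..n}")
    case True
    then have "resT n \<Phi> i \<in> {1..n}" "\<Phi> (Tp i) = Tp (resT n \<Phi> i)" using \<Phi>.Tp_image by auto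
    then have "\<Psi> (\<Phi> (Tp i)) = Tp (resT n \<Psi> (resT n \<Phi> i))" using \<Psi>.Tp_image by auto
    then show ?thesis using True unfolding resT_def[of n "\<Psi> \<circ> \<Phi>"] by simp
  next
    case False
    then show ?thesis by (simp add: resT_outside)
  qed
qed

end

theorem theorem2p4:
  fixes n :: nat and G :: "(nat \<Rightarrow> nat) set" and \<B> :: "nat set set"
  assumes "n \<ge> 1"
    and "subgroup G (sym_group n)"
    and "is_block_partition n G \<B>"
  shows "(\<forall>\<Psi>\<in>Aut n G \<B>. \<Psi> ` (Tp ` {1..n}) = Tp ` {1..n})
       \<and> resT n \<in> iso (Aut_group n G \<B>) ((sym_group n)\<lparr>carrier := G\<rparr>)"
proof -
  interpret U_poset n G \<B>
    by (intro U_poset.intro perm_group.intro U_poset_axioms.intro assms)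
  have "\<Psi> ` (Tp ` {1..n}) = Tp ` {1..n}" if "\<Psi> \<in> Aut n G \<B>" for \<Psi>
    using U_automorphism.Tp_layer_image[OF U_automorphismI[OF that]] .
  moreover have "resT n \<in> hom (Aut_group n G \<B>) ((sym_group n)\<lparr>carrier := G\<rparr>)"
    by (rule homI) (auto simp: Aut_group_def sym_group_def U_automorphism.resT_in[OF U_automorphismI] resT_comp)
  moreover have "bij_betw (resT n) (Aut n G \<B>) G"
  proof (rule bij_betw_imageI)
    show "inj_on (resT n) (Aut n G \<B>)" by (auto intro: inj_onI Aut_eqI)
    have "g \<in> resT n ` Aut n G \<B>" if "g \<in> G" for g
      using Uaut_in_Aut[OF that] resT_Uaut[OF that] by (metis image_eqI)
    then show "resT n ` Aut n G \<B> = G"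
      using U_automorphism.resT_in[OF U_automorphismI] by blast
  qed
  ultimately show ?thesis by (simp add: iso_def Aut_group_def)
qed

end
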